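(* Consider Algorithm Q-LDP under Assumptions A1–A4 (see context), and fix an agent $i\in[m]$ and a horizon $T\in\mathbb{N}^+$. (1) Define $\varrho^i_{t,\psi}=2d_l\sum_{p=0}^{t-1}(1-|C_{ii}|)^p\lambda_{t-1-p}$ and $\varrho^i_{t,\theta}=\sum_{p=0}^{t-1}(1-|R_{ii}|)^{t-p-1}\big(C_zP_z^p+\frac{1}{|u_i|}\big)(\varrho^i_{p+1,\psi}+\varrho^i_{p,\psi})$. If $d_0^i\ge\sum_{t=0}^{T-1}(\varrho^i_{t,\psi}+\varrho^i_{t,\theta})(t+1)^{\varsigma^i}$, then the mechanism $\mathcal{M}^i_T$ is $(0,\delta^i)$-LDP with $\delta^i=\sum_{t=0}^{T-1}(\varrho^i_{t,\psi}+\varrho^i_{t,\theta})/d_t^i\le1$. (2) There exist constants $C_0,C_3>0$, not depending on $T$, such that if $d_0^i\ge\sum_{t=0}^{\infty}\frac{C_3(C_z+C_0)}{(t+1)^{1+\nu-\varsigma^i}}$ (a finite quantity since $\varsigma^i<\nu$), then for every horizon $T$ (hence over infinitely many iterations) the mechanism $\mathcal{M}^i_T$ is $(0,\delta^i)$-LDP with $\delta^i=\sum_{t=0}^{T-1}\frac{C_3(C_z+C_0)}{d_0^i(t+1)^{1+\nu-\varsigma^i}}\le1$.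
   Context: Setting. There are $m$ agents. Agent $i$ has a loss $l_i(\theta,x)$, $\theta\in\mathbb{R}^d$, and receives at each time $k=0,1,2,\dots$ a data point $x_k^i\sim\Phi^i$. Let $f_i(\theta)=\mathbb{E}_{x\sim\Phi^i}[l_i(\theta,x)]$ and $F=\frac1m\sum_i f_i$. Assumption A1: $F$ convex with bounded level sets and a minimizer. Assumption A2: data i.i.d. over time; $\mathbb{E}[\nabla l_i(\theta,x_k^i)]=\nabla f_i(\theta)$; $\mathbb{E}\|\nabla l_i(\theta,x_k^i)-\nabla f_i(\theta)\|^2\le\kappa^2$; $\nabla l_i(\cdot,x)$ is $L$-Lipschitz. Assumption A3: $\|\nabla l_i(\theta,x_k^i)\|_1\le d_l$ for all $\theta,i,k$. Assumption A4: $R,C\in\mathbb{R}^{m\times m}$ have nonnegative off-diagonal entries, $R_{ii}=-\sum_{j\ne i}R_{ij}<0$, $C_{ii}=-\sum_{j\ne i}C_{ji}<0$, $1+R_{ii}>0$, $1+C_{ii}>0$; the graph $\mathcal{G}_R$ (edge $j\to i$ iff $R_{ij}>0$) and the graph $\mathcal{G}_{C^T}$ (reverse of the graph with edge $j\to i$ iff $C_{ij}>0$) each contain a spanning tree with a common root. $\mathbb{N}^{in}_{R,i}=\{j\ne i:R_{ij}>0\}$, $\mathbb{N}^{in}_{C,i}=\{j\ne i:C_{ij}>0\}$. $u$ denotes the unique nonnegative vector with $u^T(I+R)=u^T$, $u^T\mathbf 1=m$. Under A4 there exist constants $C_z>0$, $P_z\in(0,1)$ with $\big|\frac{1}{m[z_t^i]_i}-\frac1{u_i}\big|\le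 C_zP_z^t$ for all $i,t$ (with $z_t^i$ from the algorithm below); these are the $C_z,P_z$ used in the claim. Dynamic stochastic quantizer with stepsize $d>0$: for $y\in\mathbb{R}$ write $y=z+nd$ with $n\in\mathbb{Z}$, $z\in(0,d]$; $Q(y)=nd$ w.p. $1-z/d$, $Q(y)=(n+1)d$ w.p. $z/d$; vectors quantized componentwise with fresh independent randomness. Algorithm Q-LDP: $\lambda_t=\lambda_0/(t+1)^\nu$, $d_t^i=d_0^i/(t+1)^{\varsigma^i}$, $\lambda_0,d_0^i>0$, $\nu,\varsigma^i\in(\frac12,1)$, $\max_i\varsigma^i<\nu$; $\theta_0^i,\psi_0^i$ arbitrary, $z_0^i=e_i$. With $g_t^i=\frac1{t+1}\sum_{k=0}^t\nabla l_i(\theta_t^i,x_k^i)$ and quantization of agent $j$'s values at stepsize $d_t^j$: $\psi_{t+1}^i=(1+C_{ii})\psi_t^i+\sum_{j\in\mathbb{N}^{in}_{C,i}}C_{ij}Q(\psi_t^j)+\lambda_tg_t^i$, $\theta_{t+1}^i=(1+R_{ii})\theta_t^i+\sum_{j\in\mathbb{N}^{in}_{R,i}}R_{ij}Q(\theta_t^j)-\frac{\psi_{t+1}^i-\psi_t^i}{m[z_t^i]_i}$, $z_{t+1}^i=z_t^i+\sum_{j\in\mathbb{N}^{in}_{R,i}}R_{ij}(z_t^j-z_t^i)$. Local differential privacy. Local datasets $\mathcal{D}^i=\{x_0^i,\dots,x_{T-1}^i\}$ and $\mathcal{D}'^i=\{x_0'^i,\dots,x_{T-1}'^i\}$ are adjacent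 if they differ in exactly one time index $k$. The mechanism $\mathcal{M}^i_T(\mathcal{D}^i)$ is the sequence of quantized messages $(Q(\theta_t^i),Q(\psi_t^i))_{t=0}^{T-1}$ released by agent $i$ when run on its local data $\mathcal{D}^i$, with all messages received from other agents held identical between the two runs. A mechanism $\mathcal{M}$ is $(0,\delta)$-LDP if for all adjacent $\mathcal{D}^i,\mathcal{D}'^i$ and every Borel set $\mathcal{S}$ of outputs, $\mathbb{P}[\mathcal{M}(\mathcal{D}^i)\in\mathcal{S}]\le\mathbb{P}[\mathcal{M}(\mathcal{D}'^i)\in\mathcal{S}]+\delta$. *)

theory Defs
  imports "HOL-Analysis.Analysis" "HOL-Probability.Probability"
begin

definition l1norm :: "real^'n \<Rightarrow> real" where
  "l1norm v = (\<Sum>k\<in>UNIV. \<bar>v $ k\<bar>)"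

text \<open>Dynamic stochastic quantizer with stepsize d: write y = z + n d with n integer,
  z in (0,d]; i.e. n = ceiling(y/d) - 1.  Q(y) = n d w.p. 1 - z/d and (n+1) d w.p. z/d.\<close>
definition quant :: "real \<Rightarrow> real \<Rightarrow> real pmf" where
  "quant d y = (let n = \<lceil>y / d\<rceil> - 1; z = y - of_int n * d in
     map_pmf (\<lambda>b. if b then (of_int n + 1) * d else of_int n * d) (bernoulli_pmf (z / d)))"

definition quant_vec :: "real \<Rightarrow> real^'d::finite \<Rightarrow> (real^'d) pmf" where
  "quant_vec d v = map_pmf vec_lambda (Pi_pmf UNIV 0 (\<lambda>k. quant d (v $ k)))"

text \<open>E a b means: directed edge a -> b.  A spanning (out-)tree rooted at r is given
  by a parent map: every non-root vertex v has a tree edge par v -> v, and following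
  parents from any vertex reaches r.\<close>
definition has_spanning_tree_rooted :: "('v::finite \<Rightarrow> 'v \<Rightarrow> bool) \<Rightarrow> 'v \<Rightarrow> bool" where
  "has_spanning_tree_rooted E r \<longleftrightarrow>
     (\<exists>par. (\<forall>v. v \<noteq> r \<longrightarrow> E (par v) v) \<and> (\<forall>v. \<exists>n. (par ^^ n) v = r))"

definition edge_R :: "real^'m^'m \<Rightarrow> 'm \<Rightarrow> 'm \<Rightarrow> bool" where
  "edge_R R j i \<longleftrightarrow> R $ i $ j > 0"

text \<open>Graph G_{C^T}: reverse of the graph with edge j -> i iff C_ij > 0,
  i.e. edge i -> j iff C_ij > 0.\<close>
definition edge_CT :: "real^'m^'m \<Rightarrow> 'm \<Rightarrow> 'm \<Rightarrow> bool" where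
  "edge_CT C i j \<longleftrightarrow> C $ i $ j > 0"

definition assm_A4 :: "real^'m::finite^'m \<Rightarrow> real^'m^'m \<Rightarrow> bool" where
  "assm_A4 R C \<longleftrightarrow>
     (\<forall>i j. i \<noteq> j \<longrightarrow> R $ i $ j \<ge> 0 \<and> C $ i $ j \<ge> 0) \<and>
     (\<forall>i. R $ i $ i = - (\<Sum>j\<in>UNIV - {i}. R $ i $ j) \<and> R $ i $ i < 0) \<and>
     (\<forall>i. C $ i $ i = - (\<Sum>j\<in>UNIV - {i}. C $ j $ i) \<and> C $ i $ i < 0) \<and>
     (\<forall>i. 1 + R $ i $ i > 0 \<and> 1 + C $ i $ i > 0) \<and>
     (\<exists>r. has_spanning_tree_rooted (edge_R R) r \<and> has_spanning_tree_rooted (edge_CT C) r)"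

definition N_in :: "real^'m^'m \<Rightarrow> 'm \<Rightarrow> 'm set" where
  "N_in A i = {j. j \<noteq> i \<and> A $ i $ j > 0}"

definition u_vec :: "real^'m::finite^'m \<Rightarrow> real^'m" where
  "u_vec R = (THE u. (\<forall>k. u $ k \<ge> 0) \<and> u v* (mat 1 + R) = u \<and>
                     (\<Sum>k\<in>UNIV. u $ k) = real CARD('m))"

primrec zseq :: "real^'m::finite^'m \<Rightarrow> nat \<Rightarrow> 'm \<Rightarrow> real^'m" where
  "zseq R 0 i = axis i 1"
| "zseq R (Suc t) i = zseq R t i + (\<Sum>j\<in>N_in R i. R $ i $ j *\<^sub>R (zseq R t j - zseq R t i))"

text \<open>Trajectory (theta_t^i, psi_t^i) of agent i, run on local data D (D k = x_k^i),
  step sizes lam t, with the messages mth j t = Q(theta_t^j), mps j t = Q(psi_t^j)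
  received from other agents held fixed.  Agent i's own state uses its unquantized values.\<close>
primrec qldp_traj ::
  "real^'m::finite^'m \<Rightarrow> real^'m^'m \<Rightarrow> ('m \<Rightarrow> real^'d \<Rightarrow> 'x \<Rightarrow> real^'d) \<Rightarrow> 'm \<Rightarrow>
   (nat \<Rightarrow> real) \<Rightarrow> real^'d \<Rightarrow> real^'d \<Rightarrow> ('m \<Rightarrow> nat \<Rightarrow> real^'d) \<Rightarrow> ('m \<Rightarrow> nat \<Rightarrow> real^'d) \<Rightarrow>
   (nat \<Rightarrow> 'x) \<Rightarrow> nat \<Rightarrow> (real^'d) \<times> (real^'d)" where
  "qldp_traj R C gl i lam th0 ps0 mth mps D 0 = (th0, ps0)"
| "qldp_traj R C gl i lam th0 ps0 mth mps D (Suc t) =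
    (let (th, ps) = qldp_traj R C gl i lam th0 ps0 mth mps D t;
         g = (1 / real (t + 1)) *\<^sub>R (\<Sum>k\<le>t. gl i th (D k));
         ps' = (1 + C $ i $ i) *\<^sub>R ps + (\<Sum>j\<in>N_in C i. C $ i $ j *\<^sub>R mps j t) + lam t *\<^sub>R g;
         th' = (1 + R $ i $ i) *\<^sub>R th + (\<Sum>j\<in>N_in R i. R $ i $ j *\<^sub>R mth j t)
               - (1 / (real CARD('m) * (zseq R t i $ i))) *\<^sub>R (ps' - ps)
     in (th', ps'))"

text \<open>The mechanism M_T^i: the (independently quantized) released messages
  (Q(theta_t^i), Q(psi_t^i)) for t < T, quantized at stepsize dstep t = d_t^i.
  Output is a sequence indexed by nat, with the dummy value (0,0) for t >= T.\<close>
definition qldp_mech ::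
  "real^'m::finite^'m \<Rightarrow> real^'m^'m \<Rightarrow> ('m \<Rightarrow> real^'d::finite \<Rightarrow> 'x \<Rightarrow> real^'d) \<Rightarrow> 'm \<Rightarrow>
   (nat \<Rightarrow> real) \<Rightarrow> (nat \<Rightarrow> real) \<Rightarrow> nat \<Rightarrow> real^'d \<Rightarrow> real^'d \<Rightarrow>
   ('m \<Rightarrow> nat \<Rightarrow> real^'d) \<Rightarrow> ('m \<Rightarrow> nat \<Rightarrow> real^'d) \<Rightarrow>
   (nat \<Rightarrow> 'x) \<Rightarrow> (nat \<Rightarrow> (real^'d) \<times> (real^'d)) pmf" where
  "qldp_mech R C gl i lam dstep T th0 ps0 mth mps D =
     Pi_pmf {..<T} (0, 0)
       (\<lambda>t. let s = qldp_traj R C gl i lam th0 ps0 mth mps D t in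
            pair_pmf (quant_vec (dstep t) (fst s)) (quant_vec (dstep t) (snd s)))"

definition adjacent_data :: "nat \<Rightarrow> (nat \<Rightarrow> 'x) \<Rightarrow> (nat \<Rightarrow> 'x) \<Rightarrow> bool" where
  "adjacent_data T D D' \<longleftrightarrow> (\<exists>k<T. D k \<noteq> D' k \<and> (\<forall>j<T. j \<noteq> k \<longrightarrow> D j = D' j))"

definition zero_delta_LDP :: "('a \<Rightarrow> 'b pmf) \<Rightarrow> ('a \<Rightarrow> 'a \<Rightarrow> bool) \<Rightarrow> real \<Rightarrow> bool" where
  "zero_delta_LDP M adj \<delta> \<longleftrightarrow>
     (\<forall>D D'. adj D D' \<longrightarrow>
        (\<forall>S. measure_pmf.prob (M D) S \<le> measure_pmf.prob (M D') S + \<delta>))"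

definition qldp_is_LDP ::
  "real^'m::finite^'m \<Rightarrow> real^'m^'m \<Rightarrow> ('m \<Rightarrow> real^'d::finite \<Rightarrow> 'x \<Rightarrow> real^'d) \<Rightarrow> 'm \<Rightarrow>
   (nat \<Rightarrow> real) \<Rightarrow> (nat \<Rightarrow> real) \<Rightarrow> nat \<Rightarrow> real \<Rightarrow> bool" where
  "qldp_is_LDP R C gl i lam dstep T \<delta> \<longleftrightarrow>
     (\<forall>th0 ps0 mth mps.
        zero_delta_LDP (qldp_mech R C gl i lam dstep T th0 ps0 mth mps) (adjacent_data T) \<delta>)"

definition rho_psi :: "real \<Rightarrow> real \<Rightarrow> (nat \<Rightarrow> real) \<Rightarrow> nat \<Rightarrow> real" where
  "rho_psi dl Cii lam t = 2 * dl * (\<Sum>p<t. (1 - \<bar>Cii\<bar>) ^ p * lam (t - 1 - p))"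

definition rho_theta ::
  "real \<Rightarrow> real \<Rightarrow> real \<Rightarrow> (nat \<Rightarrow> real) \<Rightarrow> real \<Rightarrow> real \<Rightarrow> real \<Rightarrow> nat \<Rightarrow> real" where
  "rho_theta dl Cii Rii lam Cz Pz ui t =
     (\<Sum>p<t. (1 - \<bar>Rii\<bar>) ^ (t - p - 1) * (Cz * Pz ^ p + 1 / \<bar>ui\<bar>)
             * (rho_psi dl Cii lam (p + 1) + rho_psi dl Cii lam p))"

definition floss :: "('m \<Rightarrow> 'p \<Rightarrow> 'x \<Rightarrow> real) \<Rightarrow> ('m \<Rightarrow> 'x measure) \<Rightarrow> 'm \<Rightarrow> 'p \<Rightarrow> real" where
  "floss l \<Phi> j \<theta> = (\<integral>x. l j \<theta> x \<partial>\<Phi> j)"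

definition Ftot :: "('m::finite \<Rightarrow> 'p \<Rightarrow> 'x \<Rightarrow> real) \<Rightarrow> ('m \<Rightarrow> 'x measure) \<Rightarrow> 'p \<Rightarrow> real" where
  "Ftot l \<Phi> \<theta> = (1 / real CARD('m)) * (\<Sum>j\<in>UNIV. floss l \<Phi> j \<theta>)"

definition alg_params :: "real \<Rightarrow> real \<Rightarrow> ('m \<Rightarrow> real) \<Rightarrow> ('m \<Rightarrow> real) \<Rightarrow> bool" where
  "alg_params lam0 \<nu> d0 vs \<longleftrightarrow> lam0 > 0 \<and> 1/2 < \<nu> \<and> \<nu> < 1 \<and>
     (\<forall>j. d0 j > 0 \<and> 1/2 < vs j \<and> vs j < 1 \<and> vs j < \<nu>)"

end

theory Submission
  imports Defs "HOL-Real_Asymp.Real_Asymp"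
begin

text \<open>
  Releasing a value through the stochastic quantizer with step d leaks little: inputs at distance s
  give output laws at total variation distance at most s / d, and these distances add up over the
  independently quantized coordinates and time steps. The messages received from the other agents
  are the same in both runs and cancel from the difference of the two trajectories of agent i, so
  (0, \<delta>)-LDP holds with \<delta> the sum over t < T of the l1-distance of (\<theta>_t, \<psi>_t) between
  the runs divided by d_t.

  For (1) this distance is bounded, for arbitrary data, by unrolling the linear recursions of the
  two differences with the gradient bound d_l; this is where rho_psi and rho_theta come from.
  For (2) the data differ in a single sample, so the averaged gradients differ by
  O(|\<Delta>\<theta>_t|) + 2 d_l / (t + 1). The differences then obey a coupled recursion with
  contracting diagonal, vanishing coupling \<lambda>_t and forcing of order t^-(1+\<nu>), and a weighted
  sum of them decays like t^-(1+\<nu>) uniformly over all trajectories.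
\<close>

section \<open>Total variation bounds\<close>

text \<open>For probability measures this one-sided bound is symmetric (tv_le_sym): it says that the
  total variation distance of p and q is at most \<delta>.\<close>
definition tv_le :: "'a pmf \<Rightarrow> 'a pmf \<Rightarrow> real \<Rightarrow> bool" where
  "tv_le p q \<delta> \<longleftrightarrow> (\<forall>S. measure_pmf.prob p S \<le> measure_pmf.prob q S + \<delta>)"

lemma tv_le_mono: "tv_le p q \<delta> \<Longrightarrow> \<delta> \<le> \<delta>' \<Longrightarrow> tv_le p q \<delta>'"
  unfolding tv_le_def by (meson add_left_mono order_trans)

lemma tv_le_refl: "0 \<le> \<delta> \<Longrightarrow> tv_le p p \<delta>"
  unfolding tv_le_def by simp

lemma tv_le_trans: "tv_le p q \<delta> \<Longrightarrow> tv_le q r \<epsilon> \<Longrightarrow> tv_le p r (\<delta> + \<epsilon>)"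
  unfolding tv_le_def by (smt (verit))

lemma tv_le_sym:
  assumes "tv_le p q \<delta>"
  shows "tv_le q p \<delta>"
  unfolding tv_le_def
proof
  fix S
  have "measure_pmf.prob p (UNIV - S) \<le> measure_pmf.prob q (UNIV - S) + \<delta>"
    using assms unfolding tv_le_def by blast
  then show "measure_pmf.prob q S \<le> measure_pmf.prob p S + \<delta>"
    using measure_pmf.prob_compl[of S p] measure_pmf.prob_compl[of S q] by simp
qed

lemma tv_le_map_pmf: "tv_le p q \<delta> \<Longrightarrow> tv_le (map_pmf f p) (map_pmf f q) \<delta>"
  unfolding tv_le_def by simp

lemma tv_le_bind_pmf:
  assumes "0 \<le> \<delta>" and close: "\<And>x. x \<in> set_pmf p \<Longrightarrow> tv_le (f x) (g x) \<delta>"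
  shows "tv_le (bind_pmf p f) (bind_pmf p g) \<delta>"
  unfolding tv_le_def
proof
  fix S
  have "emeasure (f x) S \<le> emeasure (g x) S + ennreal \<delta>" if "x \<in> set_pmf p" for x
    using close[OF that] \<open>0 \<le> \<delta>\<close>
    by (simp add: tv_le_def measure_pmf.emeasure_eq_measure ennreal_plus[symmetric] del: ennreal_plus)
  then have "emeasure (bind_pmf p f) S \<le> (\<integral>\<^sup>+x. emeasure (g x) S + ennreal \<delta> \<partial>p)"
    by (simp add: AE_measure_pmf_iff nn_integral_mono_AE)
  also have "\<dots> = emeasure (bind_pmf p g) S + ennreal \<delta>"
    by (simp add: nn_integral_add measure_pmf.emeasure_space_1)
  finally show "measure_pmf.prob (bind_pmf p f) S \<le> measure_pmf.prob (bind_pmf p g) S + \<delta>"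
    using \<open>0 \<le> \<delta>\<close>
    by (simp add: measure_pmf.emeasure_eq_measure ennreal_plus[symmetric] del: ennreal_plus)
qed

lemma tv_le_pair_pmf:
  assumes "0 \<le> \<delta>" "0 \<le> \<epsilon>" "tv_le p p' \<delta>" "tv_le q q' \<epsilon>"
  shows "tv_le (pair_pmf p q) (pair_pmf p' q') (\<delta> + \<epsilon>)"
proof -
  have "tv_le (pair_pmf q p) (pair_pmf q p') \<delta>"
    using assms unfolding pair_pmf_def map_pmf_def[symmetric] by (intro tv_le_bind_pmf tv_le_map_pmf)
  then have "tv_le (pair_pmf p q) (pair_pmf p' q) \<delta>"
    unfolding pair_commute_pmf[of p q] pair_commute_pmf[of p' q] by (rule tv_le_map_pmf)
  moreover have "tv_le (pair_pmf p' q) (pair_pmf p' q') \<epsilon>"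
    using assms unfolding pair_pmf_def map_pmf_def[symmetric] by (intro tv_le_bind_pmf tv_le_map_pmf)
  ultimately show ?thesis by (rule tv_le_trans)
qed

lemma tv_le_Pi_pmf:
  assumes "finite I" "\<And>k. k \<in> I \<Longrightarrow> tv_le (p k) (q k) (\<delta> k)" "\<And>k. k \<in> I \<Longrightarrow> 0 \<le> \<delta> k"
  shows "tv_le (Pi_pmf I dflt p) (Pi_pmf I dflt q) (\<Sum>k\<in>I. \<delta> k)"
  using assms
proof (induction I rule: finite_induct)
  case empty
  then show ?case by (simp add: tv_le_refl)
next
  case (insert x I)
  then have "tv_le (pair_pmf (p x) (Pi_pmf I dflt p)) (pair_pmf (q x) (Pi_pmf I dflt q)) (\<delta> x + (\<Sum>k\<in>I. \<delta> k))"
    by (intro tv_le_pair_pmf sum_nonneg) auto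
  then show ?case using insert by (simp add: Pi_pmf_insert tv_le_map_pmf)
qed

lemma tv_le_bernoulli_pmf:
  assumes "0 \<le> a" "a \<le> 1" "0 \<le> b" "b \<le> 1"
  shows "tv_le (bernoulli_pmf a) (bernoulli_pmf b) \<bar>a - b\<bar>"
  unfolding tv_le_def
proof
  fix S :: "bool set"
  have "S = {} \<or> S = {True} \<or> S = {False} \<or> S = UNIV"
    by (metis UNIV_eq_I is_singletonI' is_singleton_some_elem)
  then show "measure_pmf.prob (bernoulli_pmf a) S \<le> measure_pmf.prob (bernoulli_pmf b) S + \<bar>a - b\<bar>"
    using assms by (auto simp: measure_measure_pmf_finite UNIV_bool)
qed

section \<open>The stochastic quantizer\<close>

lemma bernoulli_pmf_0: "bernoulli_pmf 0 = return_pmf False"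
  by (simp add: set_pmf_subset_singleton[symmetric] set_pmf_iff subset_iff all_bool_eq)

lemma bernoulli_pmf_1: "bernoulli_pmf 1 = return_pmf True"
  by (simp add: set_pmf_subset_singleton[symmetric] set_pmf_iff subset_iff all_bool_eq)

lemma quant_in_cell:
  assumes d: "0 < d" and cell: "of_int n * d \<le> y" "y \<le> (of_int n + 1) * d"
  shows "quant d y = map_pmf (\<lambda>b. if b then (of_int n + 1) * d else of_int n * d)
                        (bernoulli_pmf ((y - of_int n * d) / d))"
proof -
  have "of_int n \<le> y / d" "y / d \<le> of_int n + 1"
    using cell d by (auto simp: field_simps)
  then have "\<lceil>y / d\<rceil> = n + 1 \<or> \<lceil>y / d\<rceil> = n"
    using ceiling_le_iff[of "y / d" "n + 1"] le_of_int_ceiling[of "y / d"] by linarith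
  then show ?thesis
  proof
    assume "\<lceil>y / d\<rceil> = n + 1"
    then have "\<lceil>y / d\<rceil> - 1 = n" by simp
    then show ?thesis unfolding quant_def Let_def by (simp only:)
  next
    txt \<open>At a grid point quant_def uses the cell below, where y is the right end point.\<close>
    assume "\<lceil>y / d\<rceil> = n"
    moreover from this have "y = of_int n * d"
      using \<open>of_int n \<le> y / d\<close> le_of_int_ceiling[of "y / d"] d by (auto simp: field_simps)
    ultimately show ?thesis
      using d by (simp add: quant_def Let_def bernoulli_pmf_0 bernoulli_pmf_1 algebra_simps)
  qed
qed

lemma tv_le_quant_same_cell:
  assumes d: "0 < d"
    and "of_int n * d \<le> y" "y \<le> (of_int n + 1) * d" "of_int n * d \<le> y'" "y' \<le> (of_int n + 1) * d"
  shows "tv_le (quant d y) (quant d y') (\<bar>y - y'\<bar> / d)"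
proof -
  have "tv_le (bernoulli_pmf ((y - of_int n * d) / d)) (bernoulli_pmf ((y' - of_int n * d) / d))
          \<bar>(y - of_int n * d) / d - (y' - of_int n * d) / d\<bar>"
    using assms by (intro tv_le_bernoulli_pmf) (auto simp: field_simps)
  also have "\<bar>(y - of_int n * d) / d - (y' - of_int n * d) / d\<bar> = \<bar>y - y'\<bar> / d"
    using d by (simp add: diff_divide_distrib[symmetric])
  finally show ?thesis
    using assms by (simp add: quant_in_cell tv_le_map_pmf)
qed

lemma tv_le_quant_ordered:
  assumes d: "0 < d" and "y \<le> y'"
  shows "tv_le (quant d y) (quant d y') ((y' - y) / d)"
proof (cases "y' - y < d")
  case False
  then have "1 \<le> (y' - y) / d" using d by simp
  then show ?thesis unfolding tv_le_def
    by (smt (verit) measure_nonneg measure_pmf.prob_le_1)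
next
  case True
  define k where "k = \<lfloor>y' / d\<rfloor>"
  have cell_k: "of_int k * d \<le> y'" "y' \<le> (of_int k + 1) * d"
  proof -
    have "of_int k \<le> y' / d" "y' / d \<le> of_int k + 1"
      unfolding k_def by linarith+
    then show "of_int k * d \<le> y'" "y' \<le> (of_int k + 1) * d"
      using d by (simp_all add: field_simps)
  qed
  show ?thesis
  proof (cases "of_int k * d \<le> y")
    case True
    with cell_k \<open>y \<le> y'\<close> show ?thesis
      using tv_le_quant_same_cell[OF d True _ cell_k] by auto
  next
    case False
    txt \<open>y and y' lie in neighbouring cells; pass through the grid point between them.\<close>
    have cell_below: "of_int (k - 1) * d \<le> y" "y \<le> of_int k * d"
      using False \<open>y' - y < d\<close> cell_k by (auto simp: algebra_simps)
    have "tv_le (quant d y) (quant d (of_int k * d)) ((of_int k * d - y) / d)"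
      using tv_le_quant_same_cell[OF d, of "k - 1" y "of_int k * d"] cell_below d by (simp add: algebra_simps)
    moreover have "tv_le (quant d (of_int k * d)) (quant d y') ((y' - of_int k * d) / d)"
      using tv_le_quant_same_cell[OF d, of k "of_int k * d" y'] cell_k d by (simp add: algebra_simps)
    ultimately show ?thesis
      using tv_le_trans by (fastforce simp: diff_divide_distrib)
  qed
qed

lemma tv_le_quant:
  assumes "0 < d"
  shows "tv_le (quant d y) (quant d y') (\<bar>y - y'\<bar> / d)"
  using tv_le_quant_ordered[OF assms, of y y'] tv_le_sym[OF tv_le_quant_ordered[OF assms, of y' y]]
  by (cases "y \<le> y'") simp_all

section \<open>The l1-norm and averaged gradients\<close>

lemma l1norm_nonneg: "0 \<le> l1norm v"
  unfolding l1norm_def by (simp add: sum_nonneg)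

lemma l1norm_zero [simp]: "l1norm 0 = 0"
  unfolding l1norm_def by simp

lemma l1norm_triangle: "l1norm (x + y) \<le> l1norm x + l1norm y"
  unfolding l1norm_def by (simp add: sum.distrib[symmetric] sum_mono abs_triangle_ineq)

lemma l1norm_diff_le: "l1norm (x - y) \<le> l1norm x + l1norm y"
  unfolding l1norm_def by (simp add: sum.distrib[symmetric] sum_mono abs_triangle_ineq4)

lemma l1norm_scaleR: "l1norm (c *\<^sub>R x) = \<bar>c\<bar> * l1norm x"
  unfolding l1norm_def by (simp add: abs_mult sum_distrib_left)

lemma l1norm_sum_le: "l1norm (sum f A) \<le> (\<Sum>k\<in>A. l1norm (f k))"
  by (induction A rule: infinite_finite_induct) (auto intro: order_trans[OF l1norm_triangle])

lemma norm_le_l1norm: "norm x \<le> l1norm x"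
  unfolding l1norm_def by (rule norm_le_l1_cart)

lemma l1norm_le_card_norm: "l1norm (x :: real^'n) \<le> real CARD('n) * norm x"
  unfolding l1norm_def using sum_mono[of UNIV "\<lambda>k. \<bar>x $ k\<bar>" "\<lambda>k. norm x"]
  by (simp add: component_le_norm_cart)

lemma l1norm_le_of_norm_le:
  fixes x :: "real^'n" and y :: "real^'k"
  assumes "norm x \<le> L * norm y"
  shows "l1norm x \<le> real CARD('n) * \<bar>L\<bar> * l1norm y"
proof -
  have "norm x \<le> \<bar>L\<bar> * l1norm y"
    using assms norm_le_l1norm[of y] by (smt (verit) abs_ge_self mult_mono norm_ge_zero)
  then show ?thesis
    using l1norm_le_card_norm[of x] by (smt (verit) mult.assoc mult_left_mono of_nat_0_le_iff)
qed

lemma tv_le_quant_vec: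
  assumes "0 < d"
  shows "tv_le (quant_vec d v) (quant_vec d v') (l1norm (v - v') / d)"
proof -
  have "tv_le (Pi_pmf UNIV 0 (\<lambda>k. quant d (v $ k))) (Pi_pmf UNIV 0 (\<lambda>k. quant d (v' $ k)))
           (\<Sum>k\<in>UNIV. \<bar>v $ k - v' $ k\<bar> / d)"
    using assms by (intro tv_le_Pi_pmf tv_le_quant) auto
  then show ?thesis unfolding quant_vec_def l1norm_def
    by (simp add: sum_divide_distrib tv_le_map_pmf)
qed

definition avg_grad :: "('p \<Rightarrow> 'x \<Rightarrow> real^'d) \<Rightarrow> 'p \<Rightarrow> (nat \<Rightarrow> 'x) \<Rightarrow> nat \<Rightarrow> real^'d" where
  "avg_grad g \<theta> D t = (1 / real (t + 1)) *\<^sub>R (\<Sum>k\<le>t. g \<theta> (D k))"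

lemma l1norm_avg_grad_le:
  assumes "\<And>\<theta> x. l1norm (g \<theta> x) \<le> dl"
  shows "l1norm (avg_grad g \<theta> D t) \<le> dl"
proof -
  have "l1norm (avg_grad g \<theta> D t) \<le> (1 / real (t + 1)) * (\<Sum>k\<le>t. l1norm (g \<theta> (D k)))"
    unfolding avg_grad_def l1norm_scaleR by (simp add: l1norm_sum_le divide_right_mono)
  also have "\<dots> \<le> (1 / real (t + 1)) * (\<Sum>k\<le>t. dl)"
    by (intro mult_left_mono sum_mono assms) auto
  finally show ?thesis by simp
qed

lemma l1norm_avg_grad_diff_le:
  assumes "\<And>\<theta> x. l1norm (g \<theta> x) \<le> dl"
  shows "l1norm (avg_grad g \<theta> D t - avg_grad g \<theta>' D' t) \<le> 2 * dl"
proof -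
  have "l1norm (avg_grad g \<theta> D t) \<le> dl" "l1norm (avg_grad g \<theta>' D' t) \<le> dl"
    using assms by (rule l1norm_avg_grad_le)+
  then show ?thesis
    using l1norm_diff_le[of "avg_grad g \<theta> D t" "avg_grad g \<theta>' D' t"] by linarith
qed

lemma l1norm_avg_grad_diff_adjacent_le:
  assumes bounded: "\<And>\<theta> x. l1norm (g \<theta> x) \<le> dl"
    and close: "\<And>x. l1norm (g \<theta> x - g \<theta>' x) \<le> \<epsilon>"
    and agree: "\<And>k. k \<le> t \<Longrightarrow> k \<noteq> k0 \<Longrightarrow> D k = D' k"
  shows "l1norm (avg_grad g \<theta> D t - avg_grad g \<theta>' D' t) \<le> \<epsilon> + 2 * dl / (real t + 1)"
proof -
  have dl: "0 \<le> dl" and \<epsilon>: "0 \<le> \<epsilon>"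
    using bounded close l1norm_nonneg order_trans by blast+
  have summand: "l1norm (g \<theta> (D k) - g \<theta>' (D' k)) \<le> \<epsilon> + (if k = k0 then 2 * dl else 0)"
    if "k \<le> t" for k
  proof (cases "k = k0")
    case True
    then show ?thesis
      using l1norm_diff_le[of "g \<theta> (D k)" "g \<theta>' (D' k)"] bounded[of \<theta> "D k"] bounded[of \<theta>' "D' k"] \<epsilon>
      by simp
  qed (use agree[OF that] close in simp)
  have "avg_grad g \<theta> D t - avg_grad g \<theta>' D' t
      = (1 / real (t + 1)) *\<^sub>R (\<Sum>k\<le>t. g \<theta> (D k) - g \<theta>' (D' k))"
    unfolding avg_grad_def by (simp add: sum_subtractf scaleR_diff_right)
  then have "l1norm (avg_grad g \<theta> D t - avg_grad g \<theta>' D' t)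
      \<le> (1 / real (t + 1)) * (\<Sum>k\<le>t. l1norm (g \<theta> (D k) - g \<theta>' (D' k)))"
    by (simp add: l1norm_scaleR l1norm_sum_le divide_right_mono)
  also have "\<dots> \<le> (1 / real (t + 1)) * (\<Sum>k\<le>t. \<epsilon> + (if k = k0 then 2 * dl else 0))"
    by (intro mult_left_mono sum_mono summand) auto
  also have "\<dots> \<le> (1 / real (t + 1)) * (real (t + 1) * \<epsilon> + 2 * dl)"
    using dl by (intro mult_left_mono) (auto simp: sum.distrib)
  also have "\<dots> = \<epsilon> + 2 * dl / (real t + 1)"
    by (simp add: field_simps)
  finally show ?thesis .
qed

section \<open>Linear recurrences with asymptotically contracting coefficients\<close>

lemma contracting_recurrence_bounded:
  fixes c \<beta> :: "nat \<Rightarrow> real"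
  assumes c: "c \<longlonglongrightarrow> \<gamma>" "\<gamma> < 1" and \<beta>: "convergent \<beta>"
  obtains K where "\<And>W N t. (\<And>t. 0 \<le> W t) \<Longrightarrow> W 0 = 0 \<Longrightarrow>
      (\<And>t. Suc t < N \<Longrightarrow> W (Suc t) \<le> c t * W t + \<beta> t) \<Longrightarrow> t < N \<Longrightarrow> W t \<le> K"
proof -
  define \<rho> where "\<rho> = (1 + max \<gamma> 0) / 2"
  have \<rho>: "\<gamma> < \<rho>" "\<rho> < 1" "0 \<le> \<rho>"
    using c(2) unfolding \<rho>_def by auto
  obtain t0 where t0: "\<And>t. t0 \<le> t \<Longrightarrow> c t \<le> \<rho>"
    using order_tendstoD(2)[OF c(1) \<rho>(1)] unfolding eventually_sequentially by (meson less_imp_le)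
  obtain G where G: "\<And>t. \<bar>c t\<bar> \<le> G"
    using convergent_imp_Bseq[OF convergentI[OF c(1)]] by (auto simp: Bseq_def)
  obtain B where B: "0 < B" "\<And>t. \<bar>\<beta> t\<bar> \<le> B"
    using convergent_imp_Bseq[OF \<beta>] by (auto simp: Bseq_def)
  define H where "H = max G 0 + 1"
  define S where "S = B / (1 - \<rho>)"
  have H: "1 \<le> H" "c t \<le> H - 1" for t
    unfolding H_def max_def using G[of t] abs_ge_self[of "c t"] by auto
  have S: "B = (1 - \<rho>) * S" "0 \<le> S"
    using \<rho> B unfolding S_def by auto
  then have "B \<le> S"
    using \<rho> mult_left_le_one_le[of S "1 - \<rho>"] by simp
  show ?thesis
  proof (rule that)
    fix W :: "nat \<Rightarrow> real" and N t
    assume W: "\<And>t. 0 \<le> W t" "W 0 = 0"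
      and step: "\<And>t. Suc t < N \<Longrightarrow> W (Suc t) \<le> c t * W t + \<beta> t" and "t < N"
    txt \<open>Before t0 the recursion may expand by the factor H, afterwards it contracts.\<close>
    have "W t \<le> H ^ min t t0 * S" using \<open>t < N\<close>
    proof (induction t)
      case 0
      then show ?case using W S by simp
    next
      case (Suc t)
      then have IH: "W t \<le> H ^ min t t0 * S" by simp
      have "W (Suc t) \<le> c t * W t + B"
        using step[OF Suc.prems] B(2)[of t] abs_ge_self[of "\<beta> t"] by linarith
      show ?case
      proof (cases "t < t0")
        case True
        then have "c t * W t \<le> (H - 1) * (H ^ t * S)"
          using IH H W(1)[of t] by (intro mult_mono) auto
        moreover have "B \<le> H ^ t * S"
          using \<open>B \<le> S\<close> S(2) H(1) by (simp add: order_trans[OF _ mult_le_cancel_right1[THEN iffD2]])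
        ultimately show ?thesis
          using \<open>W (Suc t) \<le> c t * W t + B\<close> True by (simp add: algebra_simps)
      next
        case False
        then have "c t * W t \<le> \<rho> * (H ^ t0 * S)"
          using IH t0[of t] \<rho>(3) W(1)[of t] by (intro mult_mono) auto
        moreover have "B \<le> (1 - \<rho>) * (H ^ t0 * S)"
          unfolding S(1) using S(2) H(1) \<rho>(2) by (intro mult_left_mono) (auto simp: mult_le_cancel_right1)
        ultimately show ?thesis
          using \<open>W (Suc t) \<le> c t * W t + B\<close> False by (simp add: algebra_simps)
      qed
    qed
    also have "\<dots> \<le> H ^ t0 * S"
      using H(1) S by (intro mult_right_mono power_increasing) auto
    finally show "W t \<le> H ^ t0 * S" .
  qed
qed

lemma contracting_recurrence_decay:
  fixes g :: "nat \<Rightarrow> real" and b p :: real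
  assumes "g \<longlonglongrightarrow> \<gamma>" "\<gamma> < 1"
  obtains K where "\<And>V N t. (\<And>t. 0 \<le> V t) \<Longrightarrow> V 0 = 0 \<Longrightarrow>
      (\<And>t. Suc t < N \<Longrightarrow> V (Suc t) \<le> g t * V t + b / (real t + 1) powr p) \<Longrightarrow>
      t < N \<Longrightarrow> V t \<le> K / (real t + 1) powr p"
proof -
  define q where "q t = ((real t + 2) / (real t + 1)) powr p" for t
  have q: "q \<longlonglongrightarrow> 1"
    unfolding q_def by real_asymp
  have q_split: "(real (Suc t) + 1) powr p = q t * (real t + 1) powr p" for t
    unfolding q_def by (simp add: powr_divide add_ac)
  obtain K where K: "\<And>W N t. (\<And>t. 0 \<le> W t) \<Longrightarrow> W 0 = 0 \<Longrightarrow>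
      (\<And>t. Suc t < N \<Longrightarrow> W (Suc t) \<le> g t * q t * W t + b * q t) \<Longrightarrow> t < N \<Longrightarrow> W t \<le> K"
  proof (rule contracting_recurrence_bounded)
    show "(\<lambda>t. g t * q t) \<longlonglongrightarrow> \<gamma>"
      using tendsto_mult[OF assms(1) q] by simp
    show "convergent (\<lambda>t. b * q t)"
      using tendsto_mult[OF tendsto_const q] by (auto simp: convergent_def)
  qed (use assms(2) in auto)
  show ?thesis
  proof (rule that)
    fix V :: "nat \<Rightarrow> real" and N t
    assume V: "\<And>t. 0 \<le> V t" "V 0 = 0" and t: "t < N"
      and step: "\<And>t. Suc t < N \<Longrightarrow> V (Suc t) \<le> g t * V t + b / (real t + 1) powr p"
    txt \<open>Rescaled by the decay rate, the recursion keeps a contracting coefficient and bounded forcing.\<close>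
    have "V t * (real t + 1) powr p \<le> K"
    proof (rule K[where W = "\<lambda>t. V t * (real t + 1) powr p"])
      fix t
      assume "Suc t < N"
      have "V (Suc t) * (real (Suc t) + 1) powr p \<le> (g t * V t + b / (real t + 1) powr p) * (q t * (real t + 1) powr p)"
        unfolding q_split using step[OF \<open>Suc t < N\<close>] by (intro mult_right_mono) (auto simp: q_def)
      then show "V (Suc t) * (real (Suc t) + 1) powr p \<le> g t * q t * (V t * (real t + 1) powr p) + b * q t"
        by (simp add: algebra_simps)
    qed (use V t in auto)
    then show "V t \<le> K / (real t + 1) powr p"
      by (simp add: le_divide_eq)
  qed
qed

lemma coupled_recurrence_decay:
  fixes a :: "nat \<Rightarrow> real" and c r A b p :: real
  assumes c: "0 \<le> c" "c < 1" and r: "r < 1" and A: "0 \<le> A" and a: "a \<longlonglongrightarrow> 0"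
  obtains K where "\<And>e f N t. (\<And>t. 0 \<le> e t) \<Longrightarrow> (\<And>t. 0 \<le> f t) \<Longrightarrow> e 0 = 0 \<Longrightarrow> f 0 = 0 \<Longrightarrow>
      (\<And>t. Suc t < N \<Longrightarrow> f (Suc t) \<le> c * f t + a t * e t + b / (real t + 1) powr p) \<Longrightarrow>
      (\<And>t. Suc t < N \<Longrightarrow> e (Suc t) \<le> r * e t + A * (f (Suc t) + f t)) \<Longrightarrow>
      t < N \<Longrightarrow> e t + f t \<le> K / (real t + 1) powr p"
proof -
  txt \<open>The Lyapunov function e + \<kappa> f contracts: the weight \<kappa> absorbs the feedback A of f into e.\<close>
  define \<rho> where "\<rho> = (1 + c) / 2"
  define \<kappa> where "\<kappa> = A * (1 + c) / (\<rho> - c) + 1"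
  have \<rho>: "c < \<rho>" "\<rho> < 1"
    using c unfolding \<rho>_def by auto
  have \<kappa>: "1 \<le> \<kappa>" "A + (A + \<kappa>) * c \<le> \<rho> * \<kappa>"
  proof -
    show "1 \<le> \<kappa>" unfolding \<kappa>_def using A c \<rho> by simp
    have "(\<kappa> - 1) * (\<rho> - c) = A * (1 + c)" unfolding \<kappa>_def using \<rho> by simp
    then show "A + (A + \<kappa>) * c \<le> \<rho> * \<kappa>" using \<rho> by (simp add: algebra_simps)
  qed
  define g where "g t = max \<rho> (r + (A + \<kappa>) * a t)" for t
  have "g \<longlonglongrightarrow> max \<rho> (r + (A + \<kappa>) * 0)"
    unfolding g_def by (intro tendsto_intros a)
  moreover have "max \<rho> (r + (A + \<kappa>) * 0) < 1" using \<rho> r by simp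
  ultimately obtain K where K: "\<And>V N t. (\<And>t. 0 \<le> V t) \<Longrightarrow> V 0 = 0 \<Longrightarrow>
      (\<And>t. Suc t < N \<Longrightarrow> V (Suc t) \<le> g t * V t + (A + \<kappa>) * b / (real t + 1) powr p) \<Longrightarrow>
      t < N \<Longrightarrow> V t \<le> K / (real t + 1) powr p"
    by (rule contracting_recurrence_decay[where b = "(A + \<kappa>) * b" and p = p]) blast
  show ?thesis
  proof (rule that)
    fix e f :: "nat \<Rightarrow> real" and N t
    assume e: "\<And>t. 0 \<le> e t" "e 0 = 0" and f: "\<And>t. 0 \<le> f t" "f 0 = 0" and "t < N"
      and f_step: "\<And>t. Suc t < N \<Longrightarrow> f (Suc t) \<le> c * f t + a t * e t + b / (real t + 1) powr p"
      and e_step: "\<And>t. Suc t < N \<Longrightarrow> e (Suc t) \<le> r * e t + A * (f (Suc t) + f t)"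
    have "e t + \<kappa> * f t \<le> K / (real t + 1) powr p"
    proof (rule K[where V = "\<lambda>t. e t + \<kappa> * f t"])
      fix t
      assume "Suc t < N"
      have "e (Suc t) + \<kappa> * f (Suc t) \<le> r * e t + A * f t + (A + \<kappa>) * f (Suc t)"
        using e_step[OF \<open>Suc t < N\<close>] by (simp add: algebra_simps)
      also have "\<dots> \<le> r * e t + A * f t + (A + \<kappa>) * (c * f t + a t * e t + b / (real t + 1) powr p)"
        using f_step[OF \<open>Suc t < N\<close>] A \<kappa>(1) by (intro add_left_mono mult_left_mono) auto
      also have "\<dots> = (r + (A + \<kappa>) * a t) * e t + (A + (A + \<kappa>) * c) * f t + (A + \<kappa>) * b / (real t + 1) powr p"
        by (simp add: algebra_simps)
      also have "\<dots> \<le> g t * e t + (g t * \<kappa>) * f t + (A + \<kappa>) * b / (real t + 1) powr p"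
      proof -
        have "\<rho> * \<kappa> \<le> g t * \<kappa>" using \<kappa>(1) unfolding g_def by (intro mult_right_mono) auto
        then show ?thesis
          using \<kappa>(2) e(1)[of t] f(1)[of t] unfolding g_def
          by (intro add_mono mult_right_mono) auto
      qed
      finally show "e (Suc t) + \<kappa> * f (Suc t) \<le> g t * (e t + \<kappa> * f t) + (A + \<kappa>) * b / (real t + 1) powr p"
        by (simp add: algebra_simps)
    qed (use e f \<kappa>(1) \<open>t < N\<close> in auto)
    moreover have "f t \<le> \<kappa> * f t"
      using \<kappa>(1) f(1)[of t] by (simp add: mult_le_cancel_right1)
    ultimately show "e t + f t \<le> K / (real t + 1) powr p"
      by linarith
  qed
qed

section \<open>Sensitivity of the trajectory of agent i\<close>

lemma rho_psi_0 [simp]: "rho_psi dl c lam 0 = 0"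
  unfolding rho_psi_def by simp

lemma rho_theta_0 [simp]: "rho_theta dl c r lam Cz Pz u 0 = 0"
  unfolding rho_theta_def by simp

lemma rho_psi_Suc: "rho_psi dl c lam (Suc t) = (1 - \<bar>c\<bar>) * rho_psi dl c lam t + 2 * dl * lam t"
  unfolding rho_psi_def by (subst sum.lessThan_Suc_shift) (simp add: sum_distrib_left algebra_simps)

lemma rho_theta_Suc:
  "rho_theta dl c r lam Cz Pz u (Suc t)
   = (1 - \<bar>r\<bar>) * rho_theta dl c r lam Cz Pz u t
     + (Cz * Pz ^ t + 1 / \<bar>u\<bar>) * (rho_psi dl c lam (t + 1) + rho_psi dl c lam t)"
proof -
  have "(1 - \<bar>r\<bar>) ^ (Suc t - p - 1) = (1 - \<bar>r\<bar>) * (1 - \<bar>r\<bar>) ^ (t - p - 1)" if "p < t" for p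
    using that by (simp add: power_Suc[symmetric] Suc_diff_Suc)
  then show ?thesis
    unfolding rho_theta_def by (simp add: sum_distrib_left mult.assoc)
qed

text \<open>The factor 1 / (m [z_t^i]_i) in the \<theta>-update, an estimate of 1 / u_i.\<close>

definition inv_u_estimate :: "real^'m::finite^'m \<Rightarrow> 'm \<Rightarrow> nat \<Rightarrow> real" where
  "inv_u_estimate R i t = 1 / (real CARD('m) * (zseq R t i $ i))"

context
  fixes R C :: "real^'m::finite^'m" and gl :: "'m \<Rightarrow> real^'d::finite \<Rightarrow> 'x \<Rightarrow> real^'d"
    and i :: 'm and lam :: "nat \<Rightarrow> real" and th0 ps0 :: "real^'d"
    and mth mps :: "'m \<Rightarrow> nat \<Rightarrow> real^'d"
begin

abbreviation traj_theta :: "(nat \<Rightarrow> 'x) \<Rightarrow> nat \<Rightarrow> real^'d" where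
  "traj_theta D t \<equiv> fst (qldp_traj R C gl i lam th0 ps0 mth mps D t)"

abbreviation traj_psi :: "(nat \<Rightarrow> 'x) \<Rightarrow> nat \<Rightarrow> real^'d" where
  "traj_psi D t \<equiv> snd (qldp_traj R C gl i lam th0 ps0 mth mps D t)"

lemma traj_psi_Suc:
  "traj_psi D (Suc t) = (1 + C $ i $ i) *\<^sub>R traj_psi D t + (\<Sum>j\<in>N_in C i. C $ i $ j *\<^sub>R mps j t)
     + lam t *\<^sub>R avg_grad (gl i) (traj_theta D t) D t"
  by (simp add: Let_def split_beta avg_grad_def)

lemma traj_theta_Suc:
  "traj_theta D (Suc t) = (1 + R $ i $ i) *\<^sub>R traj_theta D t + (\<Sum>j\<in>N_in R i. R $ i $ j *\<^sub>R mth j t)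
     - inv_u_estimate R i t *\<^sub>R (traj_psi D (Suc t) - traj_psi D t)"
  by (simp add: Let_def split_beta avg_grad_def inv_u_estimate_def)

lemma traj_psi_diff_Suc:
  "traj_psi D (Suc t) - traj_psi D' (Suc t) = (1 + C $ i $ i) *\<^sub>R (traj_psi D t - traj_psi D' t)
     + lam t *\<^sub>R (avg_grad (gl i) (traj_theta D t) D t - avg_grad (gl i) (traj_theta D' t) D' t)"
  unfolding traj_psi_Suc by (simp add: algebra_simps)

lemma traj_theta_diff_Suc:
  "traj_theta D (Suc t) - traj_theta D' (Suc t) = (1 + R $ i $ i) *\<^sub>R (traj_theta D t - traj_theta D' t)
     - inv_u_estimate R i t *\<^sub>R ((traj_psi D (Suc t) - traj_psi D' (Suc t)) - (traj_psi D t - traj_psi D' t))"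
  by (subst (1 2) traj_theta_Suc) (simp add: algebra_simps)

lemma l1norm_traj_psi_diff_Suc_le:
  assumes "0 \<le> 1 + C $ i $ i" "0 \<le> lam t"
  shows "l1norm (traj_psi D (Suc t) - traj_psi D' (Suc t))
    \<le> (1 + C $ i $ i) * l1norm (traj_psi D t - traj_psi D' t)
       + lam t * l1norm (avg_grad (gl i) (traj_theta D t) D t - avg_grad (gl i) (traj_theta D' t) D' t)"
  using assms unfolding traj_psi_diff_Suc
  by (metis (no_types, lifting) abs_of_nonneg l1norm_scaleR l1norm_triangle)

lemma l1norm_traj_theta_diff_Suc_le:
  assumes "0 \<le> 1 + R $ i $ i" and gain: "\<bar>inv_u_estimate R i t\<bar> \<le> A"
  shows "l1norm (traj_theta D (Suc t) - traj_theta D' (Suc t))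
    \<le> (1 + R $ i $ i) * l1norm (traj_theta D t - traj_theta D' t)
       + A * (l1norm (traj_psi D (Suc t) - traj_psi D' (Suc t)) + l1norm (traj_psi D t - traj_psi D' t))"
proof -
  have "l1norm (traj_theta D (Suc t) - traj_theta D' (Suc t))
    \<le> (1 + R $ i $ i) * l1norm (traj_theta D t - traj_theta D' t)
       + \<bar>inv_u_estimate R i t\<bar>
         * l1norm ((traj_psi D (Suc t) - traj_psi D' (Suc t)) - (traj_psi D t - traj_psi D' t))"
    using assms(1) l1norm_diff_le unfolding traj_theta_diff_Suc by (metis abs_of_nonneg l1norm_scaleR)
  also have "\<dots> \<le> (1 + R $ i $ i) * l1norm (traj_theta D t - traj_theta D' t)
       + A * (l1norm (traj_psi D (Suc t) - traj_psi D' (Suc t)) + l1norm (traj_psi D t - traj_psi D' t))"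
    using gain by (intro add_left_mono mult_mono l1norm_diff_le) (auto intro: add_nonneg_nonneg l1norm_nonneg)
  finally show ?thesis .
qed

lemma traj_sensitivity_le_rho:
  assumes dl: "\<And>\<theta> x. l1norm (gl i \<theta> x) \<le> dl" and lam: "\<And>t. 0 \<le> lam t"
    and C: "C $ i $ i \<le> 0" "0 \<le> 1 + C $ i $ i" and R: "R $ i $ i \<le> 0" "0 \<le> 1 + R $ i $ i"
    and gain: "\<And>t. \<bar>inv_u_estimate R i t\<bar> \<le> Cz * Pz ^ t + 1 / \<bar>u\<bar>"
  shows "l1norm (traj_theta D t - traj_theta D' t) \<le> rho_theta dl (C $ i $ i) (R $ i $ i) lam Cz Pz u t
       \<and> l1norm (traj_psi D t - traj_psi D' t) \<le> rho_psi dl (C $ i $ i) lam t"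
proof (induction t)
  case 0
  then show ?case by simp
next
  case (Suc t)
  have abs_diag: "1 - \<bar>C $ i $ i\<bar> = 1 + C $ i $ i" "1 - \<bar>R $ i $ i\<bar> = 1 + R $ i $ i"
    using C R by simp_all
  have psi: "l1norm (traj_psi D (Suc t) - traj_psi D' (Suc t)) \<le> rho_psi dl (C $ i $ i) lam (Suc t)"
  proof -
    have "l1norm (traj_psi D (Suc t) - traj_psi D' (Suc t))
        \<le> (1 + C $ i $ i) * rho_psi dl (C $ i $ i) lam t + lam t * (2 * dl)"
      using l1norm_traj_psi_diff_Suc_le[OF C(2) lam] Suc.IH C(2) lam[of t]
        l1norm_avg_grad_diff_le[of "gl i", OF dl]
      by (smt (verit, best) mult_left_mono)
    then show ?thesis
      unfolding rho_psi_Suc abs_diag by (simp add: algebra_simps)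
  qed
  have "l1norm (traj_theta D (Suc t) - traj_theta D' (Suc t))
      \<le> (1 + R $ i $ i) * l1norm (traj_theta D t - traj_theta D' t)
        + (Cz * Pz ^ t + 1 / \<bar>u\<bar>)
          * (l1norm (traj_psi D (Suc t) - traj_psi D' (Suc t)) + l1norm (traj_psi D t - traj_psi D' t))"
    using R(2) gain by (rule l1norm_traj_theta_diff_Suc_le)
  also have "\<dots> \<le> (1 + R $ i $ i) * rho_theta dl (C $ i $ i) (R $ i $ i) lam Cz Pz u t
        + (Cz * Pz ^ t + 1 / \<bar>u\<bar>) * (rho_psi dl (C $ i $ i) lam (Suc t) + rho_psi dl (C $ i $ i) lam t)"
  proof -
    have "0 \<le> Cz * Pz ^ t + 1 / \<bar>u\<bar>"
      using gain[of t] abs_ge_zero order_trans by blast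
    then show ?thesis
      using mult_left_mono[OF add_mono[OF psi conjunct2[OF Suc.IH]] \<open>0 \<le> Cz * Pz ^ t + 1 / \<bar>u\<bar>\<close>]
        mult_left_mono[OF conjunct1[OF Suc.IH] R(2)]
      by linarith
  qed
  finally show ?case
    using psi unfolding rho_theta_Suc abs_diag by simp
qed

lemma l1norm_traj_psi_diff_Suc_le_adjacent:
  assumes dl: "\<And>\<theta> x. l1norm (gl i \<theta> x) \<le> dl"
    and lip: "\<And>\<theta> \<theta>' x. norm (gl i \<theta> x - gl i \<theta>' x) \<le> L * norm (\<theta> - \<theta>')"
    and "0 \<le> 1 + C $ i $ i" and lam: "0 \<le> lam t" "lam t \<le> b / (real t + 1) powr p"
    and agree: "\<And>k. k \<le> t \<Longrightarrow> k \<noteq> k' \<Longrightarrow> D k = D' k"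
  shows "l1norm (traj_psi D (Suc t) - traj_psi D' (Suc t))
    \<le> (1 + C $ i $ i) * l1norm (traj_psi D t - traj_psi D' t)
       + lam t * (real CARD('d) * \<bar>L\<bar>) * l1norm (traj_theta D t - traj_theta D' t)
       + 2 * dl * b / (real t + 1) powr (1 + p)"
proof -
  let ?G = "l1norm (avg_grad (gl i) (traj_theta D t) D t - avg_grad (gl i) (traj_theta D' t) D' t)"
  have "0 \<le> dl"
    using dl l1norm_nonneg order_trans by blast
  have "?G \<le> real CARD('d) * \<bar>L\<bar> * l1norm (traj_theta D t - traj_theta D' t) + 2 * dl / (real t + 1)"
    by (intro l1norm_avg_grad_diff_adjacent_le[OF dl] l1norm_le_of_norm_le lip agree)
  then have "lam t * ?G \<le> lam t * (real CARD('d) * \<bar>L\<bar>) * l1norm (traj_theta D t - traj_theta D' t)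
      + 2 * dl * (lam t / (real t + 1))"
    using mult_left_mono[OF _ lam(1)] by (fastforce simp: algebra_simps)
  moreover have "2 * dl * (lam t / (real t + 1)) \<le> 2 * dl * b / (real t + 1) powr (1 + p)"
  proof -
    have "2 * dl * (lam t / (real t + 1)) \<le> 2 * dl * (b / (real t + 1) powr p / (real t + 1))"
      using \<open>0 \<le> dl\<close> by (intro mult_left_mono divide_right_mono lam(2)) auto
    also have "\<dots> = 2 * dl * b / (real t + 1) powr (1 + p)"
      by (simp add: powr_add mult.commute)
    finally show ?thesis .
  qed
  ultimately show ?thesis
    using l1norm_traj_psi_diff_Suc_le[OF assms(3) lam(1), where D = D and D' = D'] by linarith
qed

lemma tv_le_qldp_mech:
  assumes "\<And>t. 0 < dstep t"
  shows "tv_le (qldp_mech R C gl i lam dstep T th0 ps0 mth mps D) (qldp_mech R C gl i lam dstep T th0 ps0 mth mps D')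
     (\<Sum>t<T. (l1norm (traj_theta D t - traj_theta D' t) + l1norm (traj_psi D t - traj_psi D' t)) / dstep t)"
  unfolding qldp_mech_def Let_def add_divide_distrib using assms
  by (intro tv_le_Pi_pmf tv_le_pair_pmf tv_le_quant_vec add_nonneg_nonneg divide_nonneg_pos l1norm_nonneg) auto

end

section \<open>Local differential privacy of Q-LDP\<close>

lemma qldp_is_LDP_of_sensitivity_le:
  fixes gl :: "'m::finite \<Rightarrow> real^'d::finite \<Rightarrow> 'x \<Rightarrow> real^'d"
  assumes dstep: "\<And>t. 0 < dstep t"
    and sensitivity: "\<And>th0 ps0 mth mps D D' t. adjacent_data T D D' \<Longrightarrow> t < T \<Longrightarrow>
      l1norm (traj_theta R C gl i lam th0 ps0 mth mps D t - traj_theta R C gl i lam th0 ps0 mth mps D' t)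
      + l1norm (traj_psi R C gl i lam th0 ps0 mth mps D t - traj_psi R C gl i lam th0 ps0 mth mps D' t) \<le> s t"
  shows "qldp_is_LDP R C gl i lam dstep T (\<Sum>t<T. s t / dstep t)"
  unfolding qldp_is_LDP_def zero_delta_LDP_def
proof (intro allI impI)
  fix th0 ps0 :: "real^'d" and mth mps :: "'m \<Rightarrow> nat \<Rightarrow> real^'d" and D D' :: "nat \<Rightarrow> 'x" and S
  assume "adjacent_data T D D'"
  then have "(\<Sum>t<T. (l1norm (traj_theta R C gl i lam th0 ps0 mth mps D t - traj_theta R C gl i lam th0 ps0 mth mps D' t)
      + l1norm (traj_psi R C gl i lam th0 ps0 mth mps D t - traj_psi R C gl i lam th0 ps0 mth mps D' t)) / dstep t)
    \<le> (\<Sum>t<T. s t / dstep t)"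
    using dstep sensitivity by (intro sum_mono divide_right_mono) (auto simp: less_imp_le)
  moreover have "tv_le (qldp_mech R C gl i lam dstep T th0 ps0 mth mps D) (qldp_mech R C gl i lam dstep T th0 ps0 mth mps D')
    (\<Sum>t<T. (l1norm (traj_theta R C gl i lam th0 ps0 mth mps D t - traj_theta R C gl i lam th0 ps0 mth mps D' t)
      + l1norm (traj_psi R C gl i lam th0 ps0 mth mps D t - traj_psi R C gl i lam th0 ps0 mth mps D' t)) / dstep t)"
    by (rule tv_le_qldp_mech) (rule dstep)
  ultimately show "measure_pmf.prob (qldp_mech R C gl i lam dstep T th0 ps0 mth mps D) S
      \<le> measure_pmf.prob (qldp_mech R C gl i lam dstep T th0 ps0 mth mps D') S + (\<Sum>t<T. s t / dstep t)"
    unfolding tv_le_def by (meson add_left_mono order_trans)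
qed

lemma qldp_is_LDP_rho_schedule:
  assumes "\<And>\<theta> x. l1norm (gl i \<theta> x) \<le> dl" "\<And>t. 0 \<le> lam t"
    and "C $ i $ i \<le> 0" "0 \<le> 1 + C $ i $ i" "R $ i $ i \<le> 0" "0 \<le> 1 + R $ i $ i"
    and "\<And>t. \<bar>inv_u_estimate R i t\<bar> \<le> Cz * Pz ^ t + 1 / \<bar>u\<bar>"
    and "0 < d0"
    and budget: "(\<Sum>t<T. (rho_psi dl (C $ i $ i) lam t + rho_theta dl (C $ i $ i) (R $ i $ i) lam Cz Pz u t)
                  * (real t + 1) powr v) \<le> d0"
  shows "let \<delta> = (\<Sum>t<T. (rho_psi dl (C $ i $ i) lam t + rho_theta dl (C $ i $ i) (R $ i $ i) lam Cz Pz u t)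
                          / (d0 / (real t + 1) powr v))
         in qldp_is_LDP R C gl i lam (\<lambda>t. d0 / (real t + 1) powr v) T \<delta> \<and> \<delta> \<le> 1"
proof -
  have "l1norm (traj_theta R C gl i lam th0 ps0 mth mps D t - traj_theta R C gl i lam th0 ps0 mth mps D' t)
      + l1norm (traj_psi R C gl i lam th0 ps0 mth mps D t - traj_psi R C gl i lam th0 ps0 mth mps D' t)
    \<le> rho_psi dl (C $ i $ i) lam t + rho_theta dl (C $ i $ i) (R $ i $ i) lam Cz Pz u t"
    for th0 ps0 mth mps D D' t
    using traj_sensitivity_le_rho[where R = R and C = C and gl = gl and i = i and lam = lam, OF assms(1-7)]
    by (metis add.commute add_mono)
  then have "qldp_is_LDP R C gl i lam (\<lambda>t. d0 / (real t + 1) powr v) T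
    (\<Sum>t<T. (rho_psi dl (C $ i $ i) lam t + rho_theta dl (C $ i $ i) (R $ i $ i) lam Cz Pz u t)
            / (d0 / (real t + 1) powr v))"
    using \<open>0 < d0\<close> by (intro qldp_is_LDP_of_sensitivity_le) auto
  moreover have "(\<Sum>t<T. (rho_psi dl (C $ i $ i) lam t + rho_theta dl (C $ i $ i) (R $ i $ i) lam Cz Pz u t)
            / (d0 / (real t + 1) powr v)) \<le> 1"
    using budget \<open>0 < d0\<close> by (simp add: sum_divide_distrib[symmetric])
  ultimately show ?thesis by simp
qed

lemma qldp_is_LDP_decay:
  fixes gl :: "'m::finite \<Rightarrow> real^'d::finite \<Rightarrow> 'x \<Rightarrow> real^'d"
  assumes dl: "\<And>\<theta> x. l1norm (gl i \<theta> x) \<le> dl"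
    and lip: "\<And>\<theta> \<theta>' x. norm (gl i \<theta> x - gl i \<theta>' x) \<le> L * norm (\<theta> - \<theta>')"
    and C: "C $ i $ i < 0" "0 \<le> 1 + C $ i $ i" and R: "R $ i $ i < 0" "0 \<le> 1 + R $ i $ i"
    and gain: "\<And>t. \<bar>inv_u_estimate R i t\<bar> \<le> A"
    and lam: "\<And>t. 0 \<le> lam t" "lam \<longlonglongrightarrow> 0" "\<And>t. lam t \<le> b / (real t + 1) powr p"
  obtains K where "0 < K"
    "\<And>dstep T. (\<And>t. 0 < dstep t) \<Longrightarrow>
       qldp_is_LDP R C gl i lam dstep T (\<Sum>t<T. K / (real t + 1) powr (1 + p) / dstep t)"
proof -
  define L1 where "L1 = real CARD('d) * \<bar>L\<bar>"
  have A: "0 \<le> A"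
    using gain abs_ge_zero order_trans by blast
  have coupling: "(\<lambda>t. lam t * L1) \<longlonglongrightarrow> 0"
    using tendsto_mult_left_zero[OF lam(2)] by simp
  txt \<open>K bounds all solutions of the recursion at once, so it does not depend on the initial
    values, the received messages, the data or the quantizer steps.\<close>
  obtain K where K: "\<And>e f N t. (\<And>t. 0 \<le> e t) \<Longrightarrow> (\<And>t. 0 \<le> f t) \<Longrightarrow> e 0 = 0 \<Longrightarrow> f 0 = 0 \<Longrightarrow>
      (\<And>t. Suc t < N \<Longrightarrow> f (Suc t) \<le> (1 + C $ i $ i) * f t + lam t * L1 * e t + 2 * dl * b / (real t + 1) powr (1 + p)) \<Longrightarrow>
      (\<And>t. Suc t < N \<Longrightarrow> e (Suc t) \<le> (1 + R $ i $ i) * e t + A * (f (Suc t) + f t)) \<Longrightarrow>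
      t < N \<Longrightarrow> e t + f t \<le> K / (real t + 1) powr (1 + p)"
    by (rule coupled_recurrence_decay[where b = "2 * dl * b" and p = "1 + p", OF C(2) _ _ A coupling])
      (use C R in auto)
  show ?thesis
  proof (rule that)
    show "0 < max K 1" by simp
    fix dstep :: "nat \<Rightarrow> real" and T
    assume "\<And>t. 0 < dstep t"
    then show "qldp_is_LDP R C gl i lam dstep T (\<Sum>t<T. max K 1 / (real t + 1) powr (1 + p) / dstep t)"
    proof (rule qldp_is_LDP_of_sensitivity_le)
      fix th0 ps0 mth mps and D D' :: "nat \<Rightarrow> 'x" and t
      assume "adjacent_data T D D'" "t < T"
      then obtain k0 where agree: "\<And>k. k < T \<Longrightarrow> k \<noteq> k0 \<Longrightarrow> D k = D' k"
        unfolding adjacent_data_def by blast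
      let ?e = "\<lambda>t. l1norm (traj_theta R C gl i lam th0 ps0 mth mps D t - traj_theta R C gl i lam th0 ps0 mth mps D' t)"
      let ?f = "\<lambda>t. l1norm (traj_psi R C gl i lam th0 ps0 mth mps D t - traj_psi R C gl i lam th0 ps0 mth mps D' t)"
      have "?e t + ?f t \<le> K / (real t + 1) powr (1 + p)"
      proof (rule K[where N = T])
        fix t
        assume "Suc t < T"
        show "?f (Suc t) \<le> (1 + C $ i $ i) * ?f t + lam t * L1 * ?e t + 2 * dl * b / (real t + 1) powr (1 + p)"
          unfolding L1_def
          by (rule l1norm_traj_psi_diff_Suc_le_adjacent[where gl = gl and i = i and k' = k0, OF dl lip]) (use C lam agree \<open>Suc t < T\<close> in auto)
        show "?e (Suc t) \<le> (1 + R $ i $ i) * ?e t + A * (?f (Suc t) + ?f t)"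
          by (rule l1norm_traj_theta_diff_Suc_le) (use R gain in auto)
      qed (use \<open>t < T\<close> l1norm_nonneg in auto)
      also have "\<dots> \<le> max K 1 / (real t + 1) powr (1 + p)"
        by (simp add: divide_right_mono)
      finally show "?e t + ?f t \<le> max K 1 / (real t + 1) powr (1 + p)" .
    qed
  qed
qed

lemma summable_inverse_powr_Suc:
  fixes K a :: real
  assumes "1 < a"
  shows "summable (\<lambda>t. K / (real t + 1) powr a)"
proof -
  have "summable (\<lambda>t. real t powr (- a))"
    using assms by (simp add: summable_real_powr_iff)
  then have "summable (\<lambda>t. K * real (Suc t) powr (- a))"
    by (subst (asm) summable_Suc_iff[symmetric]) (rule summable_mult)
  then show ?thesis
    by (simp add: powr_minus_divide add.commute)
qed

lemma qldp_is_LDP_decay_schedule: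
  assumes LDP: "\<And>dstep T. (\<And>t. 0 < dstep t) \<Longrightarrow>
       qldp_is_LDP R C gl i lam dstep T (\<Sum>t<T. K / (real t + 1) powr (1 + \<nu>) / dstep t)"
    and "0 \<le> K" "0 < d0" "v < \<nu>"
    and budget: "(\<Sum>t. K / (real t + 1) powr (1 + \<nu> - v)) \<le> d0"
  shows "let \<delta> = (\<Sum>t<T. K / (d0 * (real t + 1) powr (1 + \<nu> - v)))
         in qldp_is_LDP R C gl i lam (\<lambda>t. d0 / (real t + 1) powr v) T \<delta> \<and> \<delta> \<le> 1"
proof -
  have "(\<Sum>t<T. K / (real t + 1) powr (1 + \<nu>) / (d0 / (real t + 1) powr v))
      = (\<Sum>t<T. K / (d0 * (real t + 1) powr (1 + \<nu> - v)))"
    by (intro sum.cong) (simp_all add: powr_diff field_simps)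
  then have "qldp_is_LDP R C gl i lam (\<lambda>t. d0 / (real t + 1) powr v) T
      (\<Sum>t<T. K / (d0 * (real t + 1) powr (1 + \<nu> - v)))"
    using LDP[of "\<lambda>t. d0 / (real t + 1) powr v" T] \<open>0 < d0\<close> by simp
  moreover have "summable (\<lambda>t. K / (real t + 1) powr (1 + \<nu> - v))"
    using \<open>v < \<nu>\<close> by (intro summable_inverse_powr_Suc) simp
  then have "(\<Sum>t<T. K / (d0 * (real t + 1) powr (1 + \<nu> - v))) \<le> 1"
  proof -
    have "(\<Sum>t<T. K / (d0 * (real t + 1) powr (1 + \<nu> - v)))
        = (\<Sum>t<T. K / (real t + 1) powr (1 + \<nu> - v)) / d0"
      by (simp add: sum_divide_distrib mult.commute)
    also have "\<dots> \<le> (\<Sum>t. K / (real t + 1) powr (1 + \<nu> - v)) / d0"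
      using \<open>0 \<le> K\<close> \<open>0 < d0\<close> \<open>summable _\<close> by (intro divide_right_mono sum_le_suminf) auto
    also have "\<dots> \<le> 1"
      using budget \<open>0 < d0\<close> by simp
    finally show ?thesis .
  qed
  ultimately show ?thesis by simp
qed

theorem theorem2:
  fixes l :: "'m::finite \<Rightarrow> real^'d::finite \<Rightarrow> 'x \<Rightarrow> real"
    and gl :: "'m \<Rightarrow> real^'d \<Rightarrow> 'x \<Rightarrow> real^'d"
    and \<Phi> :: "'m \<Rightarrow> 'x measure"
    and R C :: "real^'m^'m"
    and \<kappa> L dl lam0 \<nu> Cz Pz :: real
    and i :: 'm
  assumes grad: "\<And>j \<theta> x. GDERIV (\<lambda>w. l j w x) \<theta> :> gl j \<theta> x"
    and prob: "\<And>j. prob_space (\<Phi> j)"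
    and integ_l: "\<And>j \<theta>. integrable (\<Phi> j) (\<lambda>x. l j \<theta> x)"
    and A1_convex: "convex_on UNIV (Ftot l \<Phi>)"
    and A1_level: "\<And>c. bounded {\<theta>. Ftot l \<Phi> \<theta> \<le> c}"
    and A1_min: "\<exists>\<theta>s. \<forall>\<theta>. Ftot l \<Phi> \<theta>s \<le> Ftot l \<Phi> \<theta>"
    and A2_integ: "\<And>j \<theta>. integrable (\<Phi> j) (\<lambda>x. gl j \<theta> x)"
    and A2_unbiased: "\<And>j \<theta>. GDERIV (floss l \<Phi> j) \<theta> :> (\<integral>x. gl j \<theta> x \<partial>\<Phi> j)"
    and A2_var: "\<And>j \<theta>. (\<integral>\<^sup>+x. ennreal ((norm (gl j \<theta> x - (\<integral>y. gl j \<theta> y \<partial>\<Phi> j)))\<^sup>2) \<partial>\<Phi> j)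
                         \<le> ennreal (\<kappa>\<^sup>2)"
    and A2_lip: "\<And>j \<theta> \<theta>' x. norm (gl j \<theta> x - gl j \<theta>' x) \<le> L * norm (\<theta> - \<theta>')"
    and A3: "\<And>j \<theta> x. l1norm (gl j \<theta> x) \<le> dl"
    and A4: "assm_A4 R C"
    and Cz: "Cz > 0" and Pz: "0 < Pz" "Pz < 1"
    and CzPz: "\<And>j t. \<bar>1 / (real CARD('m) * (zseq R t j $ j)) - 1 / (u_vec R $ j)\<bar> \<le> Cz * Pz ^ t"
    and lam0_pos: "lam0 > 0" and nu: "1/2 < \<nu>" "\<nu> < 1"
  shows
    "(\<forall>d0 vs T. alg_params lam0 \<nu> d0 vs \<and> T \<ge> 1 \<and>
        d0 i \<ge> (\<Sum>t<T. (rho_psi dl (C $ i $ i) (\<lambda>t. lam0 / (real t + 1) powr \<nu>) t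
                       + rho_theta dl (C $ i $ i) (R $ i $ i) (\<lambda>t. lam0 / (real t + 1) powr \<nu>)
                           Cz Pz (u_vec R $ i) t) * (real t + 1) powr (vs i))
      \<longrightarrow> (let \<delta> = (\<Sum>t<T. (rho_psi dl (C $ i $ i) (\<lambda>t. lam0 / (real t + 1) powr \<nu>) t
                       + rho_theta dl (C $ i $ i) (R $ i $ i) (\<lambda>t. lam0 / (real t + 1) powr \<nu>)
                           Cz Pz (u_vec R $ i) t) / (d0 i / (real t + 1) powr (vs i)))
           in qldp_is_LDP R C gl i (\<lambda>t. lam0 / (real t + 1) powr \<nu>)
                 (\<lambda>t. d0 i / (real t + 1) powr (vs i)) T \<delta> \<and> \<delta> \<le> 1))
     \<and>
     (\<exists>C0>0. \<exists>C3>0. \<forall>d0 vs. alg_params lam0 \<nu> d0 vs \<and>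
        d0 i \<ge> (\<Sum>t. C3 * (Cz + C0) / (real t + 1) powr (1 + \<nu> - vs i))
      \<longrightarrow> (\<forall>T\<ge>1. let \<delta> = (\<Sum>t<T. C3 * (Cz + C0) / (d0 i * (real t + 1) powr (1 + \<nu> - vs i)))
           in qldp_is_LDP R C gl i (\<lambda>t. lam0 / (real t + 1) powr \<nu>)
                 (\<lambda>t. d0 i / (real t + 1) powr (vs i)) T \<delta> \<and> \<delta> \<le> 1))"
proof -
  let ?lam = "\<lambda>t. lam0 / (real t + 1) powr \<nu>"
  have C: "C $ i $ i < 0" "0 < 1 + C $ i $ i" and R: "R $ i $ i < 0" "0 < 1 + R $ i $ i"
    using A4 unfolding assm_A4_def by blast+
  have gain: "\<bar>inv_u_estimate R i t\<bar> \<le> Cz * Pz ^ t + 1 / \<bar>u_vec R $ i\<bar>" for t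
    using CzPz[of t i] abs_triangle_ineq2[of "inv_u_estimate R i t" "1 / u_vec R $ i"]
    unfolding inv_u_estimate_def by simp
  have gain_bounded: "\<bar>inv_u_estimate R i t\<bar> \<le> Cz + 1 / \<bar>u_vec R $ i\<bar>" for t
  proof -
    have "Cz * Pz ^ t \<le> Cz"
      using Cz Pz by (intro mult_left_le power_le_one) auto
    then show ?thesis using gain[of t] by linarith
  qed
  obtain K where K: "0 < K" "\<And>dstep T. (\<And>t. 0 < dstep t) \<Longrightarrow>
      qldp_is_LDP R C gl i ?lam dstep T (\<Sum>t<T. K / (real t + 1) powr (1 + \<nu>) / dstep t)"
  proof (rule qldp_is_LDP_decay[where gl = gl and i = i and R = R and C = C and dl = dl and L = L
        and A = "Cz + 1 / \<bar>u_vec R $ i\<bar>" and lam = ?lam and b = lam0 and p = \<nu>])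
    show "?lam \<longlonglongrightarrow> 0"
      using nu by real_asymp
  qed (use A3 A2_lip C R gain_bounded lam0_pos in \<open>auto intro: that\<close>)
  have K_split: "K / (Cz + 1) * (Cz + 1) = K"
    using Cz by simp
  show ?thesis (is "?finite_horizon \<and> ?all_horizons")
  proof
    show ?finite_horizon
      using A3 C R gain lam0_pos
      by (intro allI impI qldp_is_LDP_rho_schedule) (auto simp: alg_params_def)
    show ?all_horizons
      by (rule exI[of _ 1], intro conjI exI[of _ "K / (Cz + 1)"] allI impI, unfold K_split)
        (use K Cz in \<open>auto simp: alg_params_def intro!: qldp_is_LDP_decay_schedule[OF K(2)]\<close>)
  qed
qed

end
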